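(* In any execution of Algorithm $\mathsf{AG}$ (described in the context) with a guild, some process in the maximal guild sends a $\mathrm{DistributeT}$ message.
   Context: System model: a finite set $\mathcal{P}=\{p_1,\dots,p_n\}$ of processes communicating asynchronously over authenticated point-to-point links; every message sent from a correct process to a correct process is eventually delivered. A process that follows its protocol is correct; others (faulty, Byzantine) may behave arbitrarily. $F\subseteq\mathcal{P}$ denotes the (unknown) set of faulty processes of an execution. For $\mathcal{A}\subseteq 2^{\mathcal{P}}$, write $\mathcal{A}^*=\{A' : A'\subseteq A,\ A\in\mathcal{A}\}$. An asymmetric fail-prone system is an array $\mathbb{F}=[\mathcal{F}_1,\dots,\mathcal{F}_n]$ with $\mathcal{F}_i\subseteq 2^{\mathcal{P}}$. An asymmetric Byzantine quorum system for $\mathbb{F}$ is an array $\mathbb{Q}=[\mathcal{Q}_1,\dots,\mathcal{Q}_n]$ with $\mathcal{Q}_i\subseteq 2^{\mathcal{P}}$ (quorums for $p_i$) satisfying: (consistency) for all $i,j$, all $Q_i\in\mathcal{Q}_i$, $Q_j\in\mathcal{Q}_j$, $F_{ij}\in\mathcal{F}_i^*\cap\mathcal{F}_j^*$: $Q_i\cap Q_j\not\subseteq F_{ij}$; (availability) for all $i$ and $F_i\in\mathcal{F}_i$ there is $Q_i\in\mathcal{Q}_i$ with $F_i\cap Q_i=\emptyset$. A kernel for $p_i$ is a set $K\subseteq\mathcal{P}$ intersecting every $Q\in\mathcal{Q}_i$; $\mathcal{K}_i$ is the set of kernels for $p_i$. A correct process $p_i$ is wise if $F\in\mathcal{F}_i^*$.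 A guild is a set $\mathcal{G}$ of wise processes such that every $p_i\in\mathcal{G}$ has some $Q_i\in\mathcal{Q}_i$ with $Q_i\subseteq\mathcal{G}$. An execution with a guild is one in which a nonempty guild exists; the maximal guild $\mathcal{G}_{max}$ is the union of all guilds. Asymmetric reliable broadcast (arb-broadcast / arb-deliver) guarantees, in every execution with a guild: if a correct process arb-broadcasts $m$, every process of $\mathcal{G}_{max}$ eventually arb-delivers $m$; for each sender, all processes of $\mathcal{G}_{max}$ that arb-deliver from it deliver the same message; if some process of $\mathcal{G}_{max}$ arb-delivers a message from a sender, all processes of $\mathcal{G}_{max}$ eventually arb-deliver a message from that sender; a correct process arb-delivers at most one message per sender, and from a correct sender only a message it arb-broadcast. Algorithm $\mathsf{AG}$ (code of $p_i$; each correct process invokes ag-propose$(x_i)$ exactly once; each guarded "upon there being ..." action executes at most once, message handlers once per message). State: sets $S_i,T_i,U_i$ initially empty, boolean $sentT$ initially false. (1) Upon ag-propose$(x_i)$: arb-broadcast $(p_i,x_i)$. (2) Upon arb-delivering $(p_j,x_j)$ from $p_j$: $S_i\gets S_i\cup\{(p_j,x_j)\}$. (3) Upon there being $Q\in\mathcal{Q}_i$ such that for every $p_j\in Q$ some pair $(p_j,\cdot)\in S_i$: send $\langle\mathrm{DistributeS},p_i,S_i\rangle$ to all. (4) For a received $\langle\mathrm{DistributeS},p_j,S_j\rangle$: once $S_j\subseteq S_i$, provided $sentT$ is false at that moment, set $T_i\gets T_i\cup S_j$ and send $\langle\mathrm{Ack},p_i\rangle$ to $p_j$. (5) Upon Ack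 received from every member of some $Q\in\mathcal{Q}_i$: send Ready to all. (6) Upon Ready received from every member of some $Q\in\mathcal{Q}_i$: send Confirm to all. (7) Upon Confirm received from every member of some $K\in\mathcal{K}_i$: send Confirm to all. (8) Upon Confirm received from every member of some $Q\in\mathcal{Q}_i$: send $\langle\mathrm{DistributeT},p_i,T_i\rangle$ to all and set $sentT\gets$ true. (9) For a received $\langle\mathrm{DistributeT},p_j,T_j\rangle$ from $p_j$: once $T_j\subseteq S_i$, set $U_i\gets U_i\cup T_j$. (10) Upon DistributeT received from every member of some $Q\in\mathcal{Q}_i$: ag-deliver$(U_i)$. *)

theory Defs
  imports Main
begin

text \<open>Processes are the elements of a finite type 'p (so the process set is UNIV).
  A fail-prone system / quorum system is a function from processes to sets of sets of processes.\<close>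

definition downset :: "'a set set \<Rightarrow> 'a set set" where
  "downset A = {A'. \<exists>B\<in>A. A' \<subseteq> B}"

definition abqs :: "('p \<Rightarrow> 'p set set) \<Rightarrow> ('p \<Rightarrow> 'p set set) \<Rightarrow> bool" where
  "abqs Fs Qs \<longleftrightarrow>
     (\<forall>i j Qi Qj Fij. Qi \<in> Qs i \<longrightarrow> Qj \<in> Qs j \<longrightarrow> Fij \<in> downset (Fs i) \<inter> downset (Fs j)
         \<longrightarrow> \<not> (Qi \<inter> Qj \<subseteq> Fij)) \<and>
     (\<forall>i. \<forall>Fi\<in>Fs i. \<exists>Qi\<in>Qs i. Fi \<inter> Qi = {})"

definition is_kernel :: "('p \<Rightarrow> 'p set set) \<Rightarrow> 'p \<Rightarrow> 'p set \<Rightarrow> bool" where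
  "is_kernel Qs i K \<longleftrightarrow> (\<forall>Q\<in>Qs i. K \<inter> Q \<noteq> {})"

definition wise :: "('p \<Rightarrow> 'p set set) \<Rightarrow> 'p set \<Rightarrow> 'p \<Rightarrow> bool" where
  "wise Fs F i \<longleftrightarrow> i \<notin> F \<and> F \<in> downset (Fs i)"

definition guild :: "('p \<Rightarrow> 'p set set) \<Rightarrow> ('p \<Rightarrow> 'p set set) \<Rightarrow> 'p set \<Rightarrow> 'p set \<Rightarrow> bool" where
  "guild Fs Qs F G \<longleftrightarrow> (\<forall>i\<in>G. wise Fs F i) \<and> (\<forall>i\<in>G. \<exists>Q\<in>Qs i. Q \<subseteq> G)"

definition has_guild :: "('p \<Rightarrow> 'p set set) \<Rightarrow> ('p \<Rightarrow> 'p set set) \<Rightarrow> 'p set \<Rightarrow> bool" where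
  "has_guild Fs Qs F \<longleftrightarrow> (\<exists>G. G \<noteq> {} \<and> guild Fs Qs F G)"

definition Gmax :: "('p \<Rightarrow> 'p set set) \<Rightarrow> ('p \<Rightarrow> 'p set set) \<Rightarrow> 'p set \<Rightarrow> 'p set" where
  "Gmax Fs Qs F = \<Union>{G. guild Fs Qs F G}"

datatype ('p, 'v) msg =
    DistS 'p "('p \<times> 'v) set"
  | Ack 'p
  | Ready
  | Confirm
  | DistT 'p "('p \<times> 'v) set"

text \<open>Guarded actions that execute at most once: (3),(5),(6),(7),(8),(10).\<close>
datatype gact = A3 | A5 | A6 | A7 | A8 | A10

record ('p, 'v) lst =
  proposed :: bool                          \<comment> \<open>ag-propose handled (action 1)\<close>
  arbBc :: "('p \<times> 'v) option"            \<comment> \<open>message arb-broadcast by this process\<close>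
  arbDel :: "'p \<Rightarrow> ('p \<times> 'v) option"    \<comment> \<open>message arb-delivered from each sender\<close>
  Sset :: "('p \<times> 'v) set"
  Tset :: "('p \<times> 'v) set"
  Uset :: "('p \<times> 'v) set"
  sentT :: bool
  rcvd :: "('p \<times> ('p, 'v) msg) set"       \<comment> \<open>(sender, message) pairs received\<close>
  handled :: "('p \<times> ('p, 'v) msg) set"
  fired :: "gact set"
  agOut :: "('p \<times> 'v) set option"       \<comment> \<open>ag-deliver output\<close>

record ('p, 'v) cfg =
  loc :: "'p \<Rightarrow> ('p, 'v) lst"
  sent :: "('p \<times> 'p \<times> ('p, 'v) msg) set"  \<comment> \<open>(sender, receiver, message) ever sent\<close>

datatype ('p, 'v) lbl =
    Propose 'p
  | DoDistS 'p
  | HandleS 'p 'p 'p "('p \<times> 'v) set"      \<comment> \<open>(4): receiver, sender, p_j, S_j\<close>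
  | SendReady 'p
  | ConfirmQ 'p
  | ConfirmK 'p
  | DoDistT 'p
  | HandleT 'p 'p "('p \<times> 'v) set"         \<comment> \<open>(9): receiver, p_j, T_j\<close>
  | Deliver 'p
  | ArbDeliver 'p 'p "'p \<times> 'v"            \<comment> \<open>arb-deliver at receiver from sender, then (2)\<close>
  | Recv 'p 'p "('p, 'v) msg"              \<comment> \<open>receiver gets message from sender\<close>
  | Byz 'p 'p "('p, 'v) msg"               \<comment> \<open>faulty sender sends arbitrary message to receiver\<close>
  | Stutter

fun owner :: "('p, 'v) lbl \<Rightarrow> 'p option" where
  "owner (Propose i) = Some i"
| "owner (DoDistS i) = Some i"
| "owner (HandleS i k j X) = Some i"
| "owner (SendReady i) = Some i"
| "owner (ConfirmQ i) = Some i"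
| "owner (ConfirmK i) = Some i"
| "owner (DoDistT i) = Some i"
| "owner (HandleT i j X) = Some i"
| "owner (Deliver i) = Some i"
| "owner _ = None"

definition init_lst :: "('p, 'v) lst" where
  "init_lst = \<lparr>proposed = False, arbBc = None, arbDel = (\<lambda>_. None), Sset = {}, Tset = {}, Uset = {},
     sentT = False, rcvd = {}, handled = {}, fired = {}, agOut = None\<rparr>"

definition init_cfg :: "('p, 'v) cfg" where
  "init_cfg = \<lparr>loc = (\<lambda>_. init_lst), sent = {}\<rparr>"

definition setloc :: "('p, 'v) cfg \<Rightarrow> 'p \<Rightarrow> ('p, 'v) lst \<Rightarrow> ('p, 'v) cfg" where
  "setloc c i ls = c\<lparr>loc := (loc c)(i := ls)\<rparr>"

definition send_all :: "('p, 'v) cfg \<Rightarrow> 'p \<Rightarrow> ('p, 'v) msg \<Rightarrow> ('p, 'v) cfg" where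
  "send_all c i m = c\<lparr>sent := sent c \<union> {(i, k, m) | k. True}\<rparr>"

text \<open>Enabledness of a step (correct processes only execute protocol steps).\<close>
fun en :: "('p \<Rightarrow> 'p set set) \<Rightarrow> 'p set \<Rightarrow> ('p, 'v) cfg \<Rightarrow> ('p, 'v) lbl \<Rightarrow> bool" where
  "en Qs F c (Propose i) = (i \<notin> F \<and> \<not> proposed (loc c i))"
| "en Qs F c (DoDistS i) = (i \<notin> F \<and> A3 \<notin> fired (loc c i) \<and>
     (\<exists>Q\<in>Qs i. \<forall>j\<in>Q. \<exists>v. (j, v) \<in> Sset (loc c i)))"
| "en Qs F c (HandleS i k j X) = (i \<notin> F \<and> (k, DistS j X) \<in> rcvd (loc c i) \<and>
     (k, DistS j X) \<notin> handled (loc c i) \<and> X \<subseteq> Sset (loc c i))"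
| "en Qs F c (SendReady i) = (i \<notin> F \<and> A5 \<notin> fired (loc c i) \<and>
     (\<exists>Q\<in>Qs i. \<forall>j\<in>Q. \<exists>a. (j, Ack a) \<in> rcvd (loc c i)))"
| "en Qs F c (ConfirmQ i) = (i \<notin> F \<and> A6 \<notin> fired (loc c i) \<and>
     (\<exists>Q\<in>Qs i. \<forall>j\<in>Q. (j, Ready) \<in> rcvd (loc c i)))"
| "en Qs F c (ConfirmK i) = (i \<notin> F \<and> A7 \<notin> fired (loc c i) \<and>
     (\<exists>K. is_kernel Qs i K \<and> (\<forall>j\<in>K. (j, Confirm) \<in> rcvd (loc c i))))"
| "en Qs F c (DoDistT i) = (i \<notin> F \<and> A8 \<notin> fired (loc c i) \<and>
     (\<exists>Q\<in>Qs i. \<forall>j\<in>Q. (j, Confirm) \<in> rcvd (loc c i)))"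
| "en Qs F c (HandleT i j X) = (i \<notin> F \<and> (j, DistT j X) \<in> rcvd (loc c i) \<and>
     (j, DistT j X) \<notin> handled (loc c i) \<and> X \<subseteq> Sset (loc c i))"
| "en Qs F c (Deliver i) = (i \<notin> F \<and> A10 \<notin> fired (loc c i) \<and>
     (\<exists>Q\<in>Qs i. \<forall>j\<in>Q. \<exists>a X. (j, DistT a X) \<in> rcvd (loc c i)))"
| "en Qs F c (ArbDeliver i j m) = (i \<notin> F \<and> arbDel (loc c i) j = None)"
| "en Qs F c (Recv i j m) = (i \<notin> F \<and> (j, i, m) \<in> sent c)"
| "en Qs F c (Byz j i m) = (j \<in> F)"
| "en Qs F c Stutter = True"

text \<open>Effect of a step; x gives the proposals of the processes.\<close>
fun eff :: "('p \<Rightarrow> 'v) \<Rightarrow> ('p, 'v) cfg \<Rightarrow> ('p, 'v) lbl \<Rightarrow> ('p, 'v) cfg" where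
  "eff x c (Propose i) =
     setloc c i ((loc c i)\<lparr>proposed := True, arbBc := Some (i, x i)\<rparr>)"
| "eff x c (DoDistS i) =
     send_all (setloc c i ((loc c i)\<lparr>fired := insert A3 (fired (loc c i))\<rparr>)) i
       (DistS i (Sset (loc c i)))"
| "eff x c (HandleS i k j X) =
     (let ls = (loc c i)\<lparr>handled := insert (k, DistS j X) (handled (loc c i))\<rparr> in
      if sentT (loc c i) then setloc c i ls
      else (setloc c i (ls\<lparr>Tset := Tset (loc c i) \<union> X\<rparr>))\<lparr>sent := insert (i, j, Ack i) (sent c)\<rparr>)"
| "eff x c (SendReady i) =
     send_all (setloc c i ((loc c i)\<lparr>fired := insert A5 (fired (loc c i))\<rparr>)) i Ready"
| "eff x c (ConfirmQ i) =
     send_all (setloc c i ((loc c i)\<lparr>fired := insert A6 (fired (loc c i))\<rparr>)) i Confirm"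
| "eff x c (ConfirmK i) =
     send_all (setloc c i ((loc c i)\<lparr>fired := insert A7 (fired (loc c i))\<rparr>)) i Confirm"
| "eff x c (DoDistT i) =
     send_all (setloc c i ((loc c i)\<lparr>fired := insert A8 (fired (loc c i)), sentT := True\<rparr>)) i
       (DistT i (Tset (loc c i)))"
| "eff x c (HandleT i j X) =
     setloc c i ((loc c i)\<lparr>handled := insert (j, DistT j X) (handled (loc c i)),
                           Uset := Uset (loc c i) \<union> X\<rparr>)"
| "eff x c (Deliver i) =
     setloc c i ((loc c i)\<lparr>fired := insert A10 (fired (loc c i)), agOut := Some (Uset (loc c i))\<rparr>)"
| "eff x c (ArbDeliver i j m) =
     setloc c i ((loc c i)\<lparr>arbDel := (arbDel (loc c i))(j := Some m),
        Sset := (if fst m = j then insert m (Sset (loc c i)) else Sset (loc c i))\<rparr>)"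
| "eff x c (Recv i j m) = setloc c i ((loc c i)\<lparr>rcvd := insert (j, m) (rcvd (loc c i))\<rparr>)"
| "eff x c (Byz j i m) = c\<lparr>sent := insert (j, i, m) (sent c)\<rparr>"
| "eff x c Stutter = c"

definition execution :: "('p \<Rightarrow> 'p set set) \<Rightarrow> 'p set \<Rightarrow> ('p \<Rightarrow> 'v) \<Rightarrow> (nat \<Rightarrow> ('p, 'v) cfg)
    \<Rightarrow> (nat \<Rightarrow> ('p, 'v) lbl) \<Rightarrow> bool" where
  "execution Qs F x c lab \<longleftrightarrow> c 0 = init_cfg \<and>
     (\<forall>t. en Qs F (c t) (lab t) \<and> c (Suc t) = eff x (c t) (lab t))"

definition fair :: "('p \<Rightarrow> 'p set set) \<Rightarrow> 'p set \<Rightarrow> (nat \<Rightarrow> ('p, 'v) cfg)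
    \<Rightarrow> (nat \<Rightarrow> ('p, 'v) lbl) \<Rightarrow> bool" where
  "fair Qs F c lab \<longleftrightarrow>
     (\<forall>l i. owner l = Some i \<longrightarrow> i \<notin> F \<longrightarrow>
        (\<forall>t. (\<forall>t'\<ge>t. en Qs F (c t') l) \<longrightarrow> (\<exists>t'\<ge>t. lab t' = l)))"

definition reliable_links :: "'p set \<Rightarrow> (nat \<Rightarrow> ('p, 'v) cfg) \<Rightarrow> bool" where
  "reliable_links F c \<longleftrightarrow>
     (\<forall>t i j m. i \<notin> F \<longrightarrow> j \<notin> F \<longrightarrow> (i, j, m) \<in> sent (c t) \<longrightarrow>
        (\<exists>t'. (i, m) \<in> rcvd (loc (c t') j)))"

text \<open>Guarantees of asymmetric reliable broadcast w.r.t. the maximal guild G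
  (at most one delivery per sender is enforced by the step relation).\<close>
definition arb_spec :: "'p set \<Rightarrow> 'p set \<Rightarrow> (nat \<Rightarrow> ('p, 'v) cfg) \<Rightarrow> bool" where
  "arb_spec G F c \<longleftrightarrow>
     \<comment> \<open>validity\<close>
     (\<forall>t j m. j \<notin> F \<longrightarrow> arbBc (loc (c t) j) = Some m \<longrightarrow>
        (\<forall>k\<in>G. \<exists>t'. arbDel (loc (c t') k) j = Some m)) \<and>
     \<comment> \<open>consistency\<close>
     (\<forall>k\<in>G. \<forall>k'\<in>G. \<forall>j t t' m m'. arbDel (loc (c t) k) j = Some m \<longrightarrow>
        arbDel (loc (c t') k') j = Some m' \<longrightarrow> m = m') \<and>
     \<comment> \<open>totality\<close>
     (\<forall>k\<in>G. \<forall>j t m. arbDel (loc (c t) k) j = Some m \<longrightarrow>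
        (\<forall>k'\<in>G. \<exists>t' m'. arbDel (loc (c t') k') j = Some m')) \<and>
     \<comment> \<open>integrity for correct senders\<close>
     (\<forall>i j t m. i \<notin> F \<longrightarrow> j \<notin> F \<longrightarrow> arbDel (loc (c t) i) j = Some m \<longrightarrow>
        (\<exists>t'\<le>t. arbBc (loc (c t') j) = Some m))"

end

theory Submission
  imports Defs
begin

(* A guild G consists of correct processes each of which has a quorum inside G, so a
   quorum-guarded action of a member of G eventually fires once every member of G has done the
   step it waits for.  Every member arb-broadcasts its proposal, so each member eventually has an
   S-entry from a whole quorum and distributes its S; by agreement and totality of
   arb-broadcast, that S eventually lies in the S of every other member.  Were sentT never set
   at a member of G, every member would acknowledge every such DistributeS, and then Ready,
   Confirm and finally DistributeT would all be sent by members of G: a contradiction. *)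

definition cfg_le :: "('p, 'v) cfg \<Rightarrow> ('p, 'v) cfg \<Rightarrow> bool" where
  "cfg_le c c' \<longleftrightarrow> sent c \<subseteq> sent c' \<and>
     (\<forall>i. rcvd (loc c i) \<subseteq> rcvd (loc c' i) \<and> handled (loc c i) \<subseteq> handled (loc c' i) \<and>
          fired (loc c i) \<subseteq> fired (loc c' i) \<and> Sset (loc c i) \<subseteq> Sset (loc c' i) \<and>
          (sentT (loc c i) \<longrightarrow> sentT (loc c' i)) \<and>
          (\<forall>j m. arbDel (loc c i) j = Some m \<longrightarrow> arbDel (loc c' i) j = Some m))"

lemma cfg_le_refl: "cfg_le c c"
  by (auto simp: cfg_le_def)

lemma cfg_le_trans: "cfg_le a b \<Longrightarrow> cfg_le b c \<Longrightarrow> cfg_le a c"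
  unfolding cfg_le_def by blast

lemma cfg_le_eff: "en Qs F c l \<Longrightarrow> cfg_le c (eff x c l)"
  by (cases l) (auto simp: cfg_le_def setloc_def send_all_def Let_def)

lemma execution_step: "execution Qs F x c lab \<Longrightarrow> c (Suc t) = eff x (c t) (lab t)"
  by (simp add: execution_def)

lemma execution_cfg_le:
  assumes "execution Qs F x c lab" and "t \<le> t'"
  shows "cfg_le (c t) (c t')"
  using assms(2)
proof (induction t' rule: dec_induct)
  case base
  show ?case by (rule cfg_le_refl)
next
  case (step n)
  have "en Qs F (c n) (lab n)" and "c (Suc n) = eff x (c n) (lab n)"
    using assms(1) by (simp_all add: execution_def)
  with step.IH show ?case by (metis cfg_le_eff cfg_le_trans)
qed

lemma execution_eventually_stable:
  assumes "execution Qs F x c lab" and "R (c t0)" and "\<And>a b. cfg_le a b \<Longrightarrow> R a \<Longrightarrow> R b"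
  shows "eventually (\<lambda>t. R (c t)) sequentially"
  unfolding eventually_sequentially using assms execution_cfg_le by blast

lemma execution_invariant:
  assumes "execution Qs F x c lab"
    and "P init_cfg"
    and "\<And>d l. P d \<Longrightarrow> en Qs F d l \<Longrightarrow> P (eff x d l)"
  shows "P (c t)"
proof (induction t)
  case 0
  show ?case using assms(1,2) by (simp add: execution_def)
next
  case (Suc t)
  then show ?case using assms(1,3) by (simp add: execution_def)
qed

definition Sset_records_arbDel :: "('p, 'v) cfg \<Rightarrow> bool" where
  "Sset_records_arbDel c \<longleftrightarrow> (\<forall>i m. m \<in> Sset (loc c i) \<longleftrightarrow> arbDel (loc c i) (fst m) = Some m)"

lemma execution_Sset_records_arbDel:
  fixes c :: "nat \<Rightarrow> ('p, 'v) cfg"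
  assumes "execution Qs F x c lab"
  shows "Sset_records_arbDel (c t)"
proof (rule execution_invariant[OF assms])
  show "Sset_records_arbDel init_cfg"
    by (simp add: Sset_records_arbDel_def init_cfg_def init_lst_def)
next
  fix d :: "('p, 'v) cfg" and l
  assume "Sset_records_arbDel d" and "en Qs F d l"
  then show "Sset_records_arbDel (eff x d l)"
    by (cases l) (auto simp: Sset_records_arbDel_def setloc_def send_all_def Let_def)
qed

definition ag_inv :: "('p, 'v) cfg \<Rightarrow> bool" where
  "ag_inv c \<longleftrightarrow>
     (\<forall>i. proposed (loc c i) \<longrightarrow> (\<exists>v. arbBc (loc c i) = Some (i, v))) \<and>
     (\<forall>i. A3 \<in> fired (loc c i) \<longrightarrow>
        (\<exists>S. (\<forall>k. (i, k, DistS i S) \<in> sent c) \<and> S \<subseteq> Sset (loc c i))) \<and>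
     (\<forall>i k. A5 \<in> fired (loc c i) \<longrightarrow> (i, k, Ready) \<in> sent c) \<and>
     (\<forall>i k. A6 \<in> fired (loc c i) \<longrightarrow> (i, k, Confirm) \<in> sent c) \<and>
     (\<forall>i. A8 \<in> fired (loc c i) \<longrightarrow> sentT (loc c i)) \<and>
     (\<forall>i k j X. (k, DistS j X) \<in> handled (loc c i) \<longrightarrow> sentT (loc c i) \<or> (i, j, Ack i) \<in> sent c) \<and>
     (\<forall>i. sentT (loc c i) \<longrightarrow> (\<exists>T. \<forall>k. (i, k, DistT i T) \<in> sent c))"

lemma ag_inv_sent_mono:
  assumes "ag_inv c" and "loc c' = loc c" and "sent c \<subseteq> sent c'"
  shows "ag_inv c'"
  using assms(1,3) unfolding ag_inv_def assms(2)
  by - (elim conjE, intro conjI; meson subsetD)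

lemma ag_inv_eff:
  assumes "ag_inv c" and "en Qs F c l"
  shows "ag_inv (eff x c l)"
proof (cases l)
  case HandleS
  with assms show ?thesis
    by (auto simp: ag_inv_def setloc_def Let_def) blast
next
  case ArbDeliver
  with assms show ?thesis
    by (auto simp: ag_inv_def setloc_def) (meson subset_insertI2)
next
  case Byz
  with assms show ?thesis
    by (auto intro: ag_inv_sent_mono[OF assms(1)])
qed (use assms in \<open>auto simp: ag_inv_def setloc_def send_all_def\<close>)

lemma ag_inv_init: "ag_inv init_cfg"
  by (simp add: ag_inv_def init_cfg_def init_lst_def)

lemma execution_ag_inv:
  assumes "execution Qs F x c lab"
  shows "ag_inv (c t)"
  using assms ag_inv_init ag_inv_eff by (rule execution_invariant)

lemma finite_Sset:
  fixes d :: "('p::finite, 'v) cfg"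
  assumes "Sset_records_arbDel d"
  shows "finite (Sset (loc d i))"
proof (rule finite_subset)
  show "Sset (loc d i) \<subseteq> ran (arbDel (loc d i))"
    using assms unfolding Sset_records_arbDel_def ran_def by blast
  show "finite (ran (arbDel (loc d i)))"
    by (rule finite_ran) simp
qed

lemma arb_spec_mono: "arb_spec G' F c \<Longrightarrow> G \<subseteq> G' \<Longrightarrow> arb_spec G F c"
  unfolding arb_spec_def by (elim conjE, intro conjI; meson subsetD)

lemma arb_spec_validity:
  "arb_spec G F c \<Longrightarrow> j \<notin> F \<Longrightarrow> arbBc (loc (c t) j) = Some m \<Longrightarrow> k \<in> G
    \<Longrightarrow> \<exists>t'. arbDel (loc (c t') k) j = Some m"
  unfolding arb_spec_def by blast

lemma arb_spec_agreement:
  "arb_spec G F c \<Longrightarrow> k \<in> G \<Longrightarrow> k' \<in> G \<Longrightarrow> arbDel (loc (c t) k) j = Some m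
    \<Longrightarrow> arbDel (loc (c t') k') j = Some m' \<Longrightarrow> m = m'"
  unfolding arb_spec_def by blast

lemma arb_spec_totality:
  "arb_spec G F c \<Longrightarrow> k \<in> G \<Longrightarrow> arbDel (loc (c t) k) j = Some m \<Longrightarrow> k' \<in> G
    \<Longrightarrow> \<exists>t' m'. arbDel (loc (c t') k') j = Some m'"
  unfolding arb_spec_def by blast

lemma fair_progress:
  assumes "fair Qs F c lab" and "owner l = Some i" and "i \<notin> F"
    and "\<And>t. lab t = l \<Longrightarrow> P (c (Suc t))"
    and "eventually (\<lambda>t. P (c t) \<or> en Qs F (c t) l) sequentially"
  shows "\<exists>t. P (c t)"
proof (rule ccontr)
  assume never: "\<nexists>t. P (c t)"
  obtain N where "\<forall>t\<ge>N. P (c t) \<or> en Qs F (c t) l"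
    using assms(5) unfolding eventually_sequentially by blast
  with never have "\<forall>t\<ge>N. en Qs F (c t) l" by blast
  with assms(1-3) obtain t where "lab t = l"
    unfolding fair_def by blast
  with assms(4) never show False by blast
qed

locale ag_run =
  fixes Qs :: "'p::finite \<Rightarrow> 'p set set"
    and F :: "'p set"
    and x :: "'p \<Rightarrow> 'v"
    and c :: "nat \<Rightarrow> ('p, 'v) cfg"
    and lab :: "nat \<Rightarrow> ('p, 'v) lbl"
    and G :: "'p set"
  assumes execution: "execution Qs F x c lab"
    and fair: "fair Qs F c lab"
    and reliable: "reliable_links F c"
    and arb: "arb_spec G F c"
    and correct: "G \<inter> F = {}"
    and quorum_closed: "\<forall>i\<in>G. \<exists>Q\<in>Qs i. Q \<subseteq> G"
begin

lemma step: "c (Suc t) = eff x (c t) (lab t)"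
  using execution by (rule execution_step)

lemma inv: "ag_inv (c t)"
  using execution by (rule execution_ag_inv)

lemma Sset_iff: "m \<in> Sset (loc (c t) i) \<longleftrightarrow> arbDel (loc (c t) i) (fst m) = Some m"
  using execution_Sset_records_arbDel[OF execution] unfolding Sset_records_arbDel_def by blast

lemma eventually_received:
  assumes "i \<in> G" and "j \<in> G" and "(i, j, m) \<in> sent (c t)"
  shows "eventually (\<lambda>t. (i, m) \<in> rcvd (loc (c t) j)) sequentially"
proof -
  obtain t' where "(i, m) \<in> rcvd (loc (c t') j)"
    using reliable assms correct unfolding reliable_links_def by blast
  then show ?thesis
    by (rule execution_eventually_stable[OF execution]) (auto simp: cfg_le_def)
qed

lemma eventually_quorum:
  assumes "i \<in> G" and "\<forall>j\<in>G. eventually (\<lambda>t. P j t) sequentially"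
  shows "eventually (\<lambda>t. \<exists>Q\<in>Qs i. \<forall>j\<in>Q. P j t) sequentially"
proof -
  obtain Q where Q: "Q \<in> Qs i" "Q \<subseteq> G"
    using quorum_closed assms(1) by blast
  have "eventually (\<lambda>t. \<forall>j\<in>Q. P j t) sequentially"
    using assms(2) Q(2) by (intro eventually_ball_finite) auto
  then show ?thesis
    by (rule eventually_mono) (use Q(1) in blast)
qed

lemma broadcasts:
  assumes "j \<in> G"
  shows "\<exists>t v. arbBc (loc (c t) j) = Some (j, v)"
proof -
  have "\<exists>t. proposed (loc (c t) j)"
  proof (rule fair_progress[OF fair, of "Propose j" j])
    show "proposed (loc (c (Suc t)) j)" if "lab t = Propose j" for t
      using step[of t] that by (simp add: setloc_def)
    show "eventually (\<lambda>t. proposed (loc (c t) j) \<or> en Qs F (c t) (Propose j)) sequentially"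
      using assms correct by (intro always_eventually) auto
  qed (use assms correct in auto)
  then show ?thesis
    using inv unfolding ag_inv_def by blast
qed

lemma eventually_Sset_entry:
  assumes "k \<in> G" and "j \<in> G"
  shows "eventually (\<lambda>t. \<exists>v. (j, v) \<in> Sset (loc (c t) k)) sequentially"
proof -
  obtain t v where "arbBc (loc (c t) j) = Some (j, v)"
    using broadcasts assms(2) by blast
  then obtain t' where "arbDel (loc (c t') k) j = Some (j, v)"
    using arb_spec_validity[OF arb] assms correct by blast
  then have "(j, v) \<in> Sset (loc (c t') k)"
    by (simp add: Sset_iff)
  then have "eventually (\<lambda>t. (j, v) \<in> Sset (loc (c t) k)) sequentially"
    by (rule execution_eventually_stable[OF execution]) (auto simp: cfg_le_def)
  then show ?thesis
    by (rule eventually_mono) blast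
qed

lemma eventually_Sset_member:
  assumes "i \<in> G" and "k \<in> G" and "m \<in> Sset (loc (c t0) i)"
  shows "eventually (\<lambda>t. m \<in> Sset (loc (c t) k)) sequentially"
proof -
  have del: "arbDel (loc (c t0) i) (fst m) = Some m"
    using assms(3) by (simp add: Sset_iff)
  then obtain t' m' where del': "arbDel (loc (c t') k) (fst m) = Some m'"
    using arb_spec_totality[OF arb] assms(1,2) by blast
  with del have "m' = m"
    using arb_spec_agreement[OF arb] assms(1,2) by metis
  with del' have "m \<in> Sset (loc (c t') k)"
    by (simp add: Sset_iff)
  then show ?thesis
    by (rule execution_eventually_stable[OF execution]) (auto simp: cfg_le_def)
qed

lemma eventually_Sset_subset:
  assumes "i \<in> G" and "k \<in> G" and "X \<subseteq> Sset (loc (c t0) i)"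
  shows "eventually (\<lambda>t. X \<subseteq> Sset (loc (c t) k)) sequentially"
proof -
  have "finite X"
    using assms(3) finite_Sset execution_Sset_records_arbDel[OF execution] finite_subset by metis
  then have "eventually (\<lambda>t. \<forall>m\<in>X. m \<in> Sset (loc (c t) k)) sequentially"
    using eventually_Sset_member assms by (intro eventually_ball_finite) blast+
  then show ?thesis
    by (rule eventually_mono) blast
qed

lemma sends_DistS:
  assumes "i \<in> G"
  shows "\<exists>t S. (\<forall>k. (i, k, DistS i S) \<in> sent (c t)) \<and> S \<subseteq> Sset (loc (c t) i)"
proof (rule fair_progress[OF fair, of "DoDistS i" i])
  show "\<exists>S. (\<forall>k. (i, k, DistS i S) \<in> sent (c (Suc t))) \<and> S \<subseteq> Sset (loc (c (Suc t)) i)"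
    if "lab t = DoDistS i" for t
    using step[of t] that by (auto simp: setloc_def send_all_def)
  have "eventually (\<lambda>t. \<exists>Q\<in>Qs i. \<forall>j\<in>Q. \<exists>v. (j, v) \<in> Sset (loc (c t) i)) sequentially"
    using assms eventually_Sset_entry by (intro eventually_quorum) auto
  then show "eventually (\<lambda>t. (\<exists>S. (\<forall>k. (i, k, DistS i S) \<in> sent (c t)) \<and> S \<subseteq> Sset (loc (c t) i))
      \<or> en Qs F (c t) (DoDistS i)) sequentially"
    by (rule eventually_mono) (use inv assms correct in \<open>auto simp: ag_inv_def\<close>)
qed (use assms correct in auto)

lemma sends_Ack:
  assumes "i \<in> G" and "k \<in> G"
  shows "(\<exists>t. sentT (loc (c t) k)) \<or> (\<exists>t. (k, i, Ack k) \<in> sent (c t))"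
proof -
  obtain t0 S where S: "\<forall>k. (i, k, DistS i S) \<in> sent (c t0)" "S \<subseteq> Sset (loc (c t0) i)"
    using sends_DistS assms(1) by blast
  have "\<exists>t. (i, DistS i S) \<in> handled (loc (c t) k)"
  proof (rule fair_progress[OF fair, of "HandleS k i i S" k])
    show "(i, DistS i S) \<in> handled (loc (c (Suc t)) k)" if "lab t = HandleS k i i S" for t
      using step[of t] that by (simp add: setloc_def Let_def)
    have "eventually (\<lambda>t. (i, DistS i S) \<in> rcvd (loc (c t) k) \<and> S \<subseteq> Sset (loc (c t) k)) sequentially"
      using eventually_received[OF assms S(1)[rule_format]] eventually_Sset_subset[OF assms S(2)]
      by (rule eventually_conj)
    then show "eventually (\<lambda>t. (i, DistS i S) \<in> handled (loc (c t) k)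
        \<or> en Qs F (c t) (HandleS k i i S)) sequentially"
      by (rule eventually_mono) (use assms correct in auto)
  qed (use assms correct in auto)
  then show ?thesis
    using inv unfolding ag_inv_def by blast
qed

lemma sends_Ready:
  assumes "i \<in> G" and "\<forall>j\<in>G. eventually (\<lambda>t. (j, Ack j) \<in> rcvd (loc (c t) i)) sequentially"
  shows "\<exists>t. \<forall>k. (i, k, Ready) \<in> sent (c t)"
proof (rule fair_progress[OF fair, of "SendReady i" i])
  show "\<forall>k. (i, k, Ready) \<in> sent (c (Suc t))" if "lab t = SendReady i" for t
    using step[of t] that by (simp add: setloc_def send_all_def)
  have "\<forall>j\<in>G. eventually (\<lambda>t. \<exists>a. (j, Ack a) \<in> rcvd (loc (c t) i)) sequentially"
  proof
    fix j
    assume "j \<in> G"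
    with assms(2) have "eventually (\<lambda>t. (j, Ack j) \<in> rcvd (loc (c t) i)) sequentially" ..
    then show "eventually (\<lambda>t. \<exists>a. (j, Ack a) \<in> rcvd (loc (c t) i)) sequentially"
      by (rule eventually_mono) blast
  qed
  with assms(1) have "eventually (\<lambda>t. \<exists>Q\<in>Qs i. \<forall>j\<in>Q. \<exists>a. (j, Ack a) \<in> rcvd (loc (c t) i))
      sequentially"
    by (rule eventually_quorum)
  then show "eventually (\<lambda>t. (\<forall>k. (i, k, Ready) \<in> sent (c t)) \<or> en Qs F (c t) (SendReady i))
      sequentially"
    by (rule eventually_mono) (use inv assms(1) correct in \<open>auto simp: ag_inv_def\<close>)
qed (use assms correct in auto)

lemma sends_Confirm:
  assumes "i \<in> G" and "\<forall>j\<in>G. eventually (\<lambda>t. (j, Ready) \<in> rcvd (loc (c t) i)) sequentially"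
  shows "\<exists>t. \<forall>k. (i, k, Confirm) \<in> sent (c t)"
proof (rule fair_progress[OF fair, of "ConfirmQ i" i])
  show "\<forall>k. (i, k, Confirm) \<in> sent (c (Suc t))" if "lab t = ConfirmQ i" for t
    using step[of t] that by (simp add: setloc_def send_all_def)
  have "eventually (\<lambda>t. \<exists>Q\<in>Qs i. \<forall>j\<in>Q. (j, Ready) \<in> rcvd (loc (c t) i)) sequentially"
    using assms by (rule eventually_quorum)
  then show "eventually (\<lambda>t. (\<forall>k. (i, k, Confirm) \<in> sent (c t)) \<or> en Qs F (c t) (ConfirmQ i))
      sequentially"
    by (rule eventually_mono) (use inv assms(1) correct in \<open>auto simp: ag_inv_def\<close>)
qed (use assms correct in auto)

lemma sets_sentT:
  assumes "i \<in> G" and "\<forall>j\<in>G. eventually (\<lambda>t. (j, Confirm) \<in> rcvd (loc (c t) i)) sequentially"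
  shows "\<exists>t. sentT (loc (c t) i)"
proof (rule fair_progress[OF fair, of "DoDistT i" i])
  show "sentT (loc (c (Suc t)) i)" if "lab t = DoDistT i" for t
    using step[of t] that by (simp add: setloc_def send_all_def)
  have "eventually (\<lambda>t. \<exists>Q\<in>Qs i. \<forall>j\<in>Q. (j, Confirm) \<in> rcvd (loc (c t) i)) sequentially"
    using assms by (rule eventually_quorum)
  then show "eventually (\<lambda>t. sentT (loc (c t) i) \<or> en Qs F (c t) (DoDistT i)) sequentially"
    by (rule eventually_mono) (use inv assms(1) correct in \<open>auto simp: ag_inv_def\<close>)
qed (use assms correct in auto)

lemma guild_member_sets_sentT:
  assumes "G \<noteq> {}"
  shows "\<exists>i\<in>G. \<exists>t. sentT (loc (c t) i)"
proof (rule ccontr)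
  assume "\<not> ?thesis"
  then have acks: "\<forall>j\<in>G. eventually (\<lambda>t. (j, Ack j) \<in> rcvd (loc (c t) i)) sequentially"
    if "i \<in> G" for i
    using sends_Ack eventually_received that by meson
  have readys: "\<forall>j\<in>G. eventually (\<lambda>t. (j, Ready) \<in> rcvd (loc (c t) i)) sequentially"
    if "i \<in> G" for i
    using sends_Ready[OF _ acks] eventually_received that by meson
  have confirms: "\<forall>j\<in>G. eventually (\<lambda>t. (j, Confirm) \<in> rcvd (loc (c t) i)) sequentially"
    if "i \<in> G" for i
    using sends_Confirm[OF _ readys] eventually_received that by meson
  obtain i where "i \<in> G"
    using assms by blast
  with sets_sentT[OF _ confirms] \<open>\<not> ?thesis\<close> show False
    by blast
qed

end

theorem lemma3p3:
  fixes Fs Qs :: "'p::finite \<Rightarrow> 'p set set"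
    and F :: "'p set"
    and x :: "'p \<Rightarrow> 'v"
    and c :: "nat \<Rightarrow> ('p, 'v) cfg"
    and lab :: "nat \<Rightarrow> ('p, 'v) lbl"
  assumes "abqs Fs Qs"
    and "execution Qs F x c lab"
    and "fair Qs F c lab"
    and "reliable_links F c"
    and "arb_spec (Gmax Fs Qs F) F c"
    and "has_guild Fs Qs F"
  shows "\<exists>i\<in>Gmax Fs Qs F. \<exists>t j T. (i, j, DistT i T) \<in> sent (c t)"
proof -
  obtain G where "G \<noteq> {}" and guild: "guild Fs Qs F G"
    using assms(6) unfolding has_guild_def by blast
  have "G \<subseteq> Gmax Fs Qs F"
    using guild unfolding Gmax_def by blast
  interpret ag_run Qs F x c lab G
  proof
    show "arb_spec G F c"
      using assms(5) \<open>G \<subseteq> Gmax Fs Qs F\<close> by (rule arb_spec_mono)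
    show "G \<inter> F = {}" and "\<forall>i\<in>G. \<exists>Q\<in>Qs i. Q \<subseteq> G"
      using guild unfolding guild_def wise_def by blast+
  qed (fact assms)+
  obtain i t where "i \<in> G" and "sentT (loc (c t) i)"
    using guild_member_sets_sentT \<open>G \<noteq> {}\<close> by blast
  moreover obtain T where "\<forall>k. (i, k, DistT i T) \<in> sent (c t)"
    using inv \<open>sentT (loc (c t) i)\<close> unfolding ag_inv_def by blast
  ultimately show ?thesis
    using \<open>G \<subseteq> Gmax Fs Qs F\<close> by blast
qed

end
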